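(* Let $G=(\mathcal V,\mathcal E)$, $\chi$, $C$, $2\le m\le n$ and $\mathbb L_m$ be as in the context. Let $\mathcal R_1=\max_{\Gamma\in\mathbb L_m}\|\Gamma\|_1$, $\mathcal R_H=\max_{\Gamma,\Gamma'\in\mathbb L_m}\big(H(\Gamma)-H(\Gamma')\big)$, let $\mathcal V_m$ be the set of vertices of $\mathbb L_m$, let $\mathcal V_m^*\subseteq\mathcal V_m$ be the set of vertices minimizing $\langle C,\cdot\rangle$ over $\mathbb L_m$, and let $\Delta=\min_{V_1\in\mathcal V_m\setminus\mathcal V_m^*,\,V_2\in\mathcal V_m^*}\big(\langle C,V_1\rangle-\langle C,V_2\rangle\big)$. Suppose $\mathbb L_m$ is tight and $|\mathcal V_m^*|=1$. If $\eta\ge \frac{2\mathcal R_1\log(64\mathcal R_1)+2\mathcal R_1+2\mathcal R_H}{\Delta}$, then the rounded assignment $x\in\chi^n$ given by $x_i=\arg\max_{x'\in\chi}(\Gamma_\eta^* )_i(x')$ for each $i\in\mathcal V$ is a MAP assignment, i.e. it maximizes $\sum_{i\in\mathcal V}\theta_i(x_i)+\sum_{ij\in\mathcal E}\theta_{ij}(x_i,x_j)$ over $\chi^n$.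
   Context: A pairwise graphical model has vertex set $\mathcal V=\{1,\dots,n\}$, edge set $\mathcal E$ (each vertex lies on at least one edge), and state set $\chi=\{0,\dots,d-1\}$, with potentials $\theta_i:\chi\to\mathbb R$ ($i\in\mathcal V$) and $\theta_{ij}:\chi^2\to\mathbb R$ ($ij\in\mathcal E$). The cost is $C=-\theta$. For $2\le m\le n$, the Sherali–Adams polytope $\mathbb L_m$ is the set of collections $\Gamma=(\Gamma_S)_{S\subseteq\mathcal V,\,1\le|S|\le m}$ of nonnegative functions $\Gamma_S:\chi^S\to[0,\infty)$, each summing to $1$, such that for $S\subset T$ marginalizing $\Gamma_T$ over the variables in $T\setminus S$ gives $\Gamma_S$; write $\Gamma_i=\Gamma_{\{i\}}$ and $\Gamma_{ij}(x_i,x_j)=\Gamma_{\{i,j\}}(x_i,x_j)$. The cost $C$ is extended to all coordinates with value $0$ on subsets that are neither singletons nor edges, and $\langle C,\Gamma\rangle=\sum_i\sum_{x}C_i(x)\Gamma_i(x)+\sum_{ij\in\mathcal E}\sum_{x_i,x_j}C_{ij}(x_i,x_j)\Gamma_{ij}(x_i,x_j)$. $\|\Gamma\|_1$ is the sum of absolute values of all entries. The entropy is $H(\Gamma)=\sum(\Gamma(-\log\Gamma+1))$ summed over all entries. For $\eta>0$, $\Gamma_\eta^*$ denotes the minimizer of $\langle C,\Gamma\rangle-\frac1\eta H(\Gamma)$ over $\Gamma\in\mathbb L_m$. $\mathbb L_m$ is called tight if the linear program $\max_{\Gamma\in\mathbb L_m}\langle\theta,\Gamma\rangle$ has an integral (all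 entries in $\{0,1\}$) optimal solution. *)

theory Defs
  imports Complex_Main "HOL-Library.FuncSet"
begin

text \<open>Vertices are 0..<n, states are 0..<d (so chi = {..<d}).
  A collection Gamma is a function  nat set => (nat => nat) => real :
  Gamma S x is the entry of Gamma_S at the local assignment x in chi^S
  (x an extensional function on S, i.e. x : PiE S (%_. {..<d})).
  Entries outside the index range are required to be 0 (canonical representation).\<close>

definition asg :: "nat \<Rightarrow> nat set \<Rightarrow> (nat \<Rightarrow> nat) set" where
  "asg d S = PiE S (\<lambda>_. {..<d})"

definition SA_index :: "nat \<Rightarrow> nat \<Rightarrow> nat set set" where
  "SA_index n m = {S. S \<subseteq> {..<n} \<and> 1 \<le> card S \<and> card S \<le> m}"

definition SA_polytope :: "nat \<Rightarrow> nat \<Rightarrow> nat \<Rightarrow> (nat set \<Rightarrow> (nat \<Rightarrow> nat) \<Rightarrow> real) set" where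
  "SA_polytope n d m = {\<Gamma>.
     (\<forall>S x. \<Gamma> S x \<noteq> 0 \<longrightarrow> S \<in> SA_index n m \<and> x \<in> asg d S) \<and>
     (\<forall>S\<in>SA_index n m. \<forall>x\<in>asg d S. 0 \<le> \<Gamma> S x) \<and>
     (\<forall>S\<in>SA_index n m. (\<Sum>x\<in>asg d S. \<Gamma> S x) = 1) \<and>
     (\<forall>S\<in>SA_index n m. \<forall>T\<in>SA_index n m. S \<subset> T \<longrightarrow>
        (\<forall>y\<in>asg d S. (\<Sum>x\<in>{x\<in>asg d T. restrict x S = y}. \<Gamma> T x) = \<Gamma> S y))}"

definition gam1 :: "(nat set \<Rightarrow> (nat \<Rightarrow> nat) \<Rightarrow> real) \<Rightarrow> nat \<Rightarrow> nat \<Rightarrow> real" where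
  "gam1 \<Gamma> i a = \<Gamma> {i} ((\<lambda>_. undefined)(i := a))"

definition gam2 :: "(nat set \<Rightarrow> (nat \<Rightarrow> nat) \<Rightarrow> real) \<Rightarrow> nat \<Rightarrow> nat \<Rightarrow> nat \<Rightarrow> nat \<Rightarrow> real" where
  "gam2 \<Gamma> i j a b = \<Gamma> {i, j} ((\<lambda>_. undefined)(i := a, j := b))"

text \<open>Edges are pairs (i,j) with i < j; theta2 i j a b = theta_ij(x_i = a, x_j = b).
  The cost is C = - theta, extended by 0; this is <C, Gamma>.\<close>
definition cost ::
  "nat \<Rightarrow> nat \<Rightarrow> (nat \<times> nat) set \<Rightarrow> (nat \<Rightarrow> nat \<Rightarrow> real) \<Rightarrow> (nat \<Rightarrow> nat \<Rightarrow> nat \<Rightarrow> nat \<Rightarrow> real)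
   \<Rightarrow> (nat set \<Rightarrow> (nat \<Rightarrow> nat) \<Rightarrow> real) \<Rightarrow> real" where
  "cost n d E \<theta>1 \<theta>2 \<Gamma> =
     (\<Sum>i<n. \<Sum>a<d. - \<theta>1 i a * gam1 \<Gamma> i a) +
     (\<Sum>(i,j)\<in>E. \<Sum>a<d. \<Sum>b<d. - \<theta>2 i j a b * gam2 \<Gamma> i j a b)"

definition norm1 :: "nat \<Rightarrow> nat \<Rightarrow> nat \<Rightarrow> (nat set \<Rightarrow> (nat \<Rightarrow> nat) \<Rightarrow> real) \<Rightarrow> real" where
  "norm1 n d m \<Gamma> = (\<Sum>S\<in>SA_index n m. \<Sum>x\<in>asg d S. \<bar>\<Gamma> S x\<bar>)"

text \<open>Entropy H(Gamma) = sum of Gamma (- log Gamma + 1) over all entries (0 log 0 = 0).\<close>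
definition entropy :: "nat \<Rightarrow> nat \<Rightarrow> nat \<Rightarrow> (nat set \<Rightarrow> (nat \<Rightarrow> nat) \<Rightarrow> real) \<Rightarrow> real" where
  "entropy n d m \<Gamma> = (\<Sum>S\<in>SA_index n m. \<Sum>x\<in>asg d S. \<Gamma> S x * (- ln (\<Gamma> S x) + 1))"

definition integral_coll :: "nat \<Rightarrow> nat \<Rightarrow> nat \<Rightarrow> (nat set \<Rightarrow> (nat \<Rightarrow> nat) \<Rightarrow> real) \<Rightarrow> bool" where
  "integral_coll n d m \<Gamma> \<longleftrightarrow> (\<forall>S\<in>SA_index n m. \<forall>x\<in>asg d S. \<Gamma> S x \<in> {0, 1})"

definition SA_tight where
  "SA_tight n d m E \<theta>1 \<theta>2 \<longleftrightarrow>
     (\<exists>\<Gamma>\<in>SA_polytope n d m. integral_coll n d m \<Gamma> \<and>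
        (\<forall>\<Gamma>'\<in>SA_polytope n d m. cost n d E \<theta>1 \<theta>2 \<Gamma> \<le> cost n d E \<theta>1 \<theta>2 \<Gamma>'))"

definition SA_vertices :: "nat \<Rightarrow> nat \<Rightarrow> nat \<Rightarrow> (nat set \<Rightarrow> (nat \<Rightarrow> nat) \<Rightarrow> real) set" where
  "SA_vertices n d m = {\<Gamma> \<in> SA_polytope n d m.
     \<forall>\<Gamma>1\<in>SA_polytope n d m. \<forall>\<Gamma>2\<in>SA_polytope n d m. \<forall>t::real. 0 < t \<and> t < 1 \<and>
       \<Gamma> = (\<lambda>S x. t * \<Gamma>1 S x + (1 - t) * \<Gamma>2 S x) \<longrightarrow> \<Gamma>1 = \<Gamma>2}"

definition SA_opt_vertices where
  "SA_opt_vertices n d m E \<theta>1 \<theta>2 = {V \<in> SA_vertices n d m.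
     \<forall>\<Gamma>\<in>SA_polytope n d m. cost n d E \<theta>1 \<theta>2 V \<le> cost n d E \<theta>1 \<theta>2 \<Gamma>}"

definition R1 where
  "R1 n d m = Sup (norm1 n d m ` SA_polytope n d m)"

definition RH where
  "RH n d m = Sup {entropy n d m \<Gamma> - entropy n d m \<Gamma>' | \<Gamma> \<Gamma>'.
                    \<Gamma> \<in> SA_polytope n d m \<and> \<Gamma>' \<in> SA_polytope n d m}"

definition gap where
  "gap n d m E \<theta>1 \<theta>2 = Inf {cost n d E \<theta>1 \<theta>2 V1 - cost n d E \<theta>1 \<theta>2 V2 | V1 V2.
      V1 \<in> SA_vertices n d m - SA_opt_vertices n d m E \<theta>1 \<theta>2 \<and>
      V2 \<in> SA_opt_vertices n d m E \<theta>1 \<theta>2}"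

definition energy where
  "energy n E \<theta>1 \<theta>2 (x :: nat \<Rightarrow> nat) =
     (\<Sum>i<n. \<theta>1 i (x i)) + (\<Sum>(i,j)\<in>E. \<theta>2 i j (x i) (x j))"

definition is_MAP where
  "is_MAP n d E \<theta>1 \<theta>2 x \<longleftrightarrow> (\<forall>i<n. x i < d) \<and>
     (\<forall>y. (\<forall>i<n. y i < d) \<longrightarrow> energy n E \<theta>1 \<theta>2 y \<le> energy n E \<theta>1 \<theta>2 x)"

end

theory Submission
  imports Defs
begin

text \<open>Tightness yields an integral optimal vertex; it is the point-mass collection \<open>\<delta>\<^sub>y\<close> of a
  labelling \<open>y\<close>, and by uniqueness it is the only optimal vertex. An affine function that is
  nonnegative at the vertices of \<open>L\<^sub>m\<close> is nonnegative on \<open>L\<^sub>m\<close>; applied to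
  \<open>\<langle>C, \<Gamma>\<rangle> - \<langle>C, \<delta>\<^sub>y\<rangle> - \<Delta> (1 - \<Gamma>\<^sub>i(y\<^sub>i))\<close> it gives
  \<open>\<Delta> (1 - \<Gamma>\<^sup>*\<^sub>i(y\<^sub>i)) \<le> \<langle>C, \<Gamma>\<^sup>* - \<delta>\<^sub>y\<rangle> \<le> (H(\<Gamma>\<^sup>*) - H(\<delta>\<^sub>y)) / \<eta> \<le> R\<^sub>H / \<eta> < \<Delta> / 2\<close>,
  because \<open>R\<^sub>1 \<ge> 1\<close> makes the hypothesis on \<open>\<eta>\<close> imply \<open>\<eta> \<Delta> > 2 R\<^sub>H\<close>. So \<open>\<Gamma>\<^sup>*\<^sub>i(y\<^sub>i) > 1/2\<close>,
  the rounding returns \<open>y\<close>, and \<open>y\<close> is a MAP assignment since \<open>\<langle>C, \<delta>\<^sub>x\<rangle>\<close> is minus the energy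
  of \<open>x\<close>.\<close>

lemma add_le_sum:
  fixes f :: "'a \<Rightarrow> real"
  assumes "finite A" "a \<in> A" "b \<in> A" "a \<noteq> b" "\<And>x. x \<in> A \<Longrightarrow> 0 \<le> f x"
  shows "f a + f b \<le> sum f A"
proof -
  have "sum f {a, b} \<le> sum f A" using assms by (intro sum_mono2) auto
  then show ?thesis using \<open>a \<noteq> b\<close> by simp
qed

lemma eq_if_gt_half:
  fixes p :: "nat \<Rightarrow> real"
  assumes "(\<Sum>a<d. p a) = 1" "\<And>a. 0 \<le> p a" "a < d" "b < d" "1 / 2 < p a" "1 / 2 < p b"
  shows "a = b"
  using add_le_sum[of "{..<d}" a b p] assms by fastforce

definition mix :: "real \<Rightarrow> ('a \<Rightarrow> 'b \<Rightarrow> real) \<Rightarrow> ('a \<Rightarrow> 'b \<Rightarrow> real) \<Rightarrow> 'a \<Rightarrow> 'b \<Rightarrow> real"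
  where "mix t A B = (\<lambda>a b. t * A a b + (1 - t) * B a b)"

lemma mix_same [simp]: "mix t A A = A"
  by (simp add: mix_def fun_eq_iff algebra_simps)

lemma mix_commute: "mix t A B = mix (1 - t) B A"
  by (simp add: mix_def fun_eq_iff)

text \<open>The model is \<open>P = {x \<ge> 0. M x = b}\<close> with finitely many coordinates \<open>K\<close>. For such \<open>P\<close>,
  \<open>antichain\<close> amounts to boundedness: if \<open>A \<le> B\<close> and \<open>A \<noteq> B\<close> then \<open>B + s (B - A) \<in> P\<close> for all
  \<open>s \<ge> 0\<close>.\<close>
locale nonneg_polytope =
  fixes P :: "('a \<Rightarrow> 'b \<Rightarrow> real) set" and K :: "('a \<times> 'b) set"
  assumes finite_K: "finite K"
    and nonneg: "G \<in> P \<Longrightarrow> 0 \<le> G a b"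
    and zero_outside: "G \<in> P \<Longrightarrow> (a, b) \<notin> K \<Longrightarrow> G a b = 0"
    and affine_closed: "A \<in> P \<Longrightarrow> B \<in> P \<Longrightarrow> (\<And>a b. 0 \<le> mix t A B a b) \<Longrightarrow> mix t A B \<in> P"
    and antichain: "A \<in> P \<Longrightarrow> B \<in> P \<Longrightarrow> (\<And>a b. A a b \<le> B a b) \<Longrightarrow> A = B"
begin

definition support :: "('a \<Rightarrow> 'b \<Rightarrow> real) \<Rightarrow> ('a \<times> 'b) set"
  where "support G = {(a, b). G a b \<noteq> 0}"

definition extreme_point :: "('a \<Rightarrow> 'b \<Rightarrow> real) \<Rightarrow> bool"
  where "extreme_point G \<longleftrightarrow> G \<in> P \<and>
     (\<forall>G1\<in>P. \<forall>G2\<in>P. \<forall>t. 0 < t \<and> t < 1 \<and> G = mix t G1 G2 \<longrightarrow> G1 = G2)"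

lemma support_subset_K: "G \<in> P \<Longrightarrow> support G \<subseteq> K"
  using zero_outside by (auto simp: support_def)

lemma finite_support: "G \<in> P \<Longrightarrow> finite (support G)"
  using finite_subset[OF support_subset_K finite_K] .

lemma support_subset_mix:
  assumes "A \<in> P" "B \<in> P" "0 < t" "t \<le> 1"
  shows "support A \<subseteq> support (mix t A B)"
proof
  fix k assume "k \<in> support A"
  then obtain a b where k: "k = (a, b)" "A a b \<noteq> 0" by (auto simp: support_def)
  then have "0 < t * A a b" using assms nonneg[of A a b] by simp
  moreover have "0 \<le> (1 - t) * B a b" using assms nonneg[of B a b] by simp
  ultimately show "k \<in> support (mix t A B)" using k by (auto simp: support_def mix_def)
qed

text \<open>\<open>C\<close> is the point where the ray from \<open>A\<close> through \<open>B\<close> leaves \<open>P\<close>: the first entry in the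
  support of \<open>A\<close> to vanish is the one minimising \<open>B/A\<close>.\<close>
lemma exit_point:
  assumes A: "A \<in> P" and B: "B \<in> P" and "A \<noteq> B"
  obtains \<mu> C where "0 \<le> \<mu>" "\<mu> < 1" "C \<in> P" "B = mix \<mu> A C"
    "support C \<subseteq> support A \<union> support B" "\<not> support A \<subseteq> support C"
proof -
  define ratio where "ratio = (\<lambda>(a, b). B a b / A a b)"
  define \<mu> where "\<mu> = Min (ratio ` support A)"
  have A_pos: "0 < A a b" if "(a, b) \<in> support A" for a b
    using that nonneg[OF A, of a b] by (simp add: support_def)
  have "support A \<noteq> {}"
  proof
    assume "support A = {}"
    then have "A a b \<le> B a b" for a b using nonneg[OF B, of a b] by (auto simp: support_def)
    then show False using antichain[OF A B] \<open>A \<noteq> B\<close> by blast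
  qed
  then have "\<mu> \<in> ratio ` support A"
    unfolding \<mu>_def using finite_support[OF A] by (intro Min_in) auto
  then obtain a0 b0 where k0: "(a0, b0) \<in> support A" "\<mu> = B a0 b0 / A a0 b0"
    by (auto simp: ratio_def)
  have "0 \<le> \<mu>" using k0(2) nonneg[OF A] nonneg[OF B] by simp
  have \<mu>_le: "\<mu> * A a b \<le> B a b" for a b
  proof (cases "(a, b) \<in> support A")
    case True
    then have "\<mu> \<le> ratio (a, b)"
      unfolding \<mu>_def using finite_support[OF A] by (intro Min_le) auto
    then show ?thesis using A_pos[OF True] by (simp add: ratio_def le_divide_eq)
  qed (use nonneg[OF B] in \<open>simp add: support_def\<close>)
  have "\<mu> < 1"
  proof (rule ccontr)
    assume "\<not> \<mu> < 1"
    then have "A a b \<le> B a b" for a b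
      using mult_right_mono[of 1 \<mu> "A a b"] \<mu>_le[of a b] nonneg[OF A, of a b] by simp
    then show False using antichain[OF A B] \<open>A \<noteq> B\<close> by blast
  qed
  define C where "C = mix (1 / (1 - \<mu>)) B A"
  have C_eq: "C a b = (B a b - \<mu> * A a b) / (1 - \<mu>)" for a b
  proof -
    have "1 - 1 / (1 - \<mu>) = - \<mu> / (1 - \<mu>)" using \<open>\<mu> < 1\<close> by (simp add: field_simps)
    then show ?thesis by (simp add: C_def mix_def diff_divide_distrib)
  qed
  have "C \<in> P"
    unfolding C_def
  proof (rule affine_closed[OF B A])
    fix a b
    show "0 \<le> mix (1 / (1 - \<mu>)) B A a b"
      using C_eq[of a b] \<mu>_le[of a b] \<open>\<mu> < 1\<close> unfolding C_def by simp
  qed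
  moreover have "B = mix \<mu> A C"
    using \<open>\<mu> < 1\<close> by (simp add: mix_def fun_eq_iff C_eq)
  moreover have "support C \<subseteq> support A \<union> support B"
    by (auto simp: support_def C_eq)
  moreover have "(a0, b0) \<notin> support C"
    using k0 A_pos by (simp add: support_def C_eq)
  ultimately show thesis using that \<open>0 \<le> \<mu>\<close> \<open>\<mu> < 1\<close> k0(1) by blast
qed

lemma extreme_point_unique_on_support:
  assumes V: "extreme_point V" and W: "W \<in> P" and "support W \<subseteq> support V"
  shows "W = V"
proof (rule ccontr)
  assume "W \<noteq> V"
  have "V \<in> P" using V by (simp add: extreme_point_def)
  obtain \<nu> C where \<nu>: "0 \<le> \<nu>" "\<nu> < 1" and C: "C \<in> P" "V = mix \<nu> W C"
    and "\<not> support W \<subseteq> support C"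
    using exit_point[OF W \<open>V \<in> P\<close> \<open>W \<noteq> V\<close>] by metis
  show False
  proof (cases "\<nu> = 0")
    case True
    then show False using C(2) \<open>support W \<subseteq> support V\<close> \<open>\<not> support W \<subseteq> support C\<close>
      by (simp add: mix_def)
  next
    case False
    then have "0 < \<nu>" using \<nu>(1) by simp
    then have "W = C" using V W C \<nu>(2) unfolding extreme_point_def by blast
    then show False using C(2) \<open>W \<noteq> V\<close> by simp
  qed
qed

lemma finite_extreme_points: "finite {V. extreme_point V}"
proof (rule finite_imageD)
  have "support ` {V. extreme_point V} \<subseteq> Pow K"
    using support_subset_K by (auto simp: extreme_point_def)
  then show "finite (support ` {V. extreme_point V})"
    using finite_K by (auto intro: finite_subset)
  show "inj_on support {V. extreme_point V}"
    using extreme_point_unique_on_support by (intro inj_onI) (auto simp: extreme_point_def)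
qed

lemma decompose_non_extreme_point:
  assumes G: "G \<in> P" and "\<not> extreme_point G"
  obtains t C C' where "0 \<le> t" "t \<le> 1" "C \<in> P" "C' \<in> P" "G = mix t C C'"
    "support C \<subset> support G" "support C' \<subset> support G"
proof -
  obtain G1 G2 t where G12: "G1 \<in> P" "G2 \<in> P" "G1 \<noteq> G2" and t: "0 < t" "t < 1"
    and G_eq: "G = mix t G1 G2"
    using assms by (auto simp: extreme_point_def)
  obtain W where W: "W \<in> P" "W \<noteq> G" "support W \<subseteq> support G"
  proof (cases "G1 = G")
    case True
    then have "G2 \<noteq> G" using G12 by simp
    moreover have "support G2 \<subseteq> support G"
      using support_subset_mix[OF G12(2) G12(1), of "1 - t"] t G_eq mix_commute[of t G1 G2] by simp
    ultimately show thesis using that G12(2) by blast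
  next
    case False
    then show thesis
      using that G12(1) support_subset_mix[OF G12(1,2)] t G_eq by simp
  qed
  obtain \<nu> C where \<nu>: "0 \<le> \<nu>" "\<nu> < 1" and C: "C \<in> P" "G = mix \<nu> W C"
    and "support C \<subseteq> support W \<union> support G" "\<not> support W \<subseteq> support C"
    using exit_point[OF W(1) G W(2)] by metis
  then have C_smaller: "support C \<subset> support G" using W(3) by blast
  then have "C \<noteq> G" by blast
  obtain \<nu>' C' where \<nu>': "0 \<le> \<nu>'" "\<nu>' < 1" and C': "C' \<in> P" "G = mix \<nu>' C C'"
    and "support C' \<subseteq> support C \<union> support G" "\<not> support C \<subseteq> support C'"
    using exit_point[OF C(1) G \<open>C \<noteq> G\<close>] by metis
  then have "support C' \<subset> support G" using C_smaller by blast
  then show thesis using that \<nu>' C(1) C' C_smaller by simp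
qed

lemma nonneg_if_nonneg_on_extreme_points:
  assumes affine: "\<And>t A B. A \<in> P \<Longrightarrow> B \<in> P \<Longrightarrow> 0 \<le> t \<Longrightarrow> t \<le> 1 \<Longrightarrow>
      \<Phi> (mix t A B) = t * \<Phi> A + (1 - t) * \<Phi> B"
    and extreme: "\<And>V. extreme_point V \<Longrightarrow> 0 \<le> \<Phi> V"
    and "G \<in> P"
  shows "0 \<le> \<Phi> G"
  using \<open>G \<in> P\<close>
proof (induction "card (support G)" arbitrary: G rule: less_induct)
  case less
  show ?case
  proof (cases "extreme_point G")
    case False
    then obtain t C C' where t: "0 \<le> t" "t \<le> 1" and C: "C \<in> P" "C' \<in> P" "G = mix t C C'"
      and "support C \<subset> support G" "support C' \<subset> support G"
      using decompose_non_extreme_point[OF less.prems] by metis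
    then have "0 \<le> \<Phi> C" "0 \<le> \<Phi> C'"
      using less.hyps C finite_support[OF less.prems] psubset_card_mono by metis+
    then show ?thesis using affine[OF C(1,2) t] C(3) t by simp
  qed (use extreme in blast)
qed

lemma extreme_point_if_01_valued:
  assumes V: "V \<in> P" and V_01: "\<And>a b. V a b \<in> {0, 1}" and le_1: "\<And>W a b. W \<in> P \<Longrightarrow> W a b \<le> 1"
  shows "extreme_point V"
proof -
  have "W = V" if W: "W \<in> P" and "support W \<subseteq> support V" for W
  proof (rule antichain[OF W V])
    fix a b
    have "V a b = 0 \<Longrightarrow> W a b = 0"
      using \<open>support W \<subseteq> support V\<close> by (auto simp: support_def)
    then show "W a b \<le> V a b" using V_01[of a b] le_1[OF W, of a b] by auto
  qed
  moreover have "support G1 \<subseteq> support V" "support G2 \<subseteq> support V"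
    if "G1 \<in> P" "G2 \<in> P" "0 < t" "t < 1" "V = mix t G1 G2" for G1 G2 t
    using that support_subset_mix[of G1 G2 t] support_subset_mix[of G2 G1 "1 - t"]
      mix_commute[of t G1 G2] by auto
  ultimately show ?thesis using V unfolding extreme_point_def by metis
qed

text \<open>The affine function \<open>c - c V\<^sub>0 - g (1 - f)\<close> is nonnegative at every extreme point.\<close>
lemma excess_cost_lower_bound:
  assumes c_affine: "\<And>t A B. c (mix t A B) = t * c A + (1 - t) * c B"
    and f_affine: "\<And>t A B. f (mix t A B) = t * f A + (1 - t) * f B"
    and "f V\<^sub>0 = 1" and f_nonneg: "\<And>V. extreme_point V \<Longrightarrow> 0 \<le> f V"
    and "0 \<le> g" and gap: "\<And>V. extreme_point V \<Longrightarrow> V \<noteq> V\<^sub>0 \<Longrightarrow> g \<le> c V - c V\<^sub>0"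
    and "G \<in> P"
  shows "g * (1 - f G) \<le> c G - c V\<^sub>0"
proof -
  have "0 \<le> c G - c V\<^sub>0 - g * (1 - f G)"
  proof (rule nonneg_if_nonneg_on_extreme_points[OF _ _ \<open>G \<in> P\<close>])
    fix V assume "extreme_point V"
    then show "0 \<le> c V - c V\<^sub>0 - g * (1 - f V)"
      using gap[of V] f_nonneg[of V] \<open>0 \<le> g\<close> \<open>f V\<^sub>0 = 1\<close>
      by (cases "V = V\<^sub>0") (auto simp: algebra_simps intro: add_increasing2)
  qed (simp add: c_affine f_affine algebra_simps)
  then show ?thesis by simp
qed

end

lemma finite_SA_index: "finite (SA_index n m)"
  by (rule finite_subset[of _ "Pow {..<n}"]) (auto simp: SA_index_def)

lemma SA_index_subset: "S \<in> SA_index n m \<Longrightarrow> S \<subseteq> {..<n}"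
  by (simp add: SA_index_def)

lemma finite_asg: "S \<in> SA_index n m \<Longrightarrow> finite (asg d S)"
  using finite_subset[OF SA_index_subset] by (auto simp: asg_def intro!: finite_PiE)

lemma singleton_SA_index: "i < n \<Longrightarrow> 1 \<le> m \<Longrightarrow> {i} \<in> SA_index n m"
  by (simp add: SA_index_def)

lemma pair_SA_index: "i < j \<Longrightarrow> j < n \<Longrightarrow> 2 \<le> m \<Longrightarrow> {i, j} \<in> SA_index n m"
  by (simp add: SA_index_def)

lemma restrict_mem_asg: "S \<in> SA_index n m \<Longrightarrow> \<forall>i<n. y i < d \<Longrightarrow> restrict y S \<in> asg d S"
  using SA_index_subset by (fastforce simp: asg_def)

context
  fixes n d m :: nat and G assumes G: "G \<in> SA_polytope n d m"
begin

lemma SA_polytope_zero_outside: "(S, x) \<notin> Sigma (SA_index n m) (asg d) \<Longrightarrow> G S x = 0"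
  using G by (auto simp: SA_polytope_def)

lemma SA_polytope_nonneg: "0 \<le> G S x"
  using G by (cases "G S x = 0") (auto simp: SA_polytope_def)

lemma SA_polytope_sum: "S \<in> SA_index n m \<Longrightarrow> (\<Sum>x\<in>asg d S. G S x) = 1"
  using G by (simp add: SA_polytope_def)

lemma SA_polytope_marginal:
  "S \<in> SA_index n m \<Longrightarrow> T \<in> SA_index n m \<Longrightarrow> S \<subset> T \<Longrightarrow> y \<in> asg d S \<Longrightarrow>
    (\<Sum>x\<in>{x\<in>asg d T. restrict x S = y}. G T x) = G S y"
  using G by (simp add: SA_polytope_def)

lemma SA_polytope_le_1: "G S x \<le> 1"
proof (cases "(S, x) \<in> Sigma (SA_index n m) (asg d)")
  case True
  then have "G S x \<le> (\<Sum>x\<in>asg d S. G S x)"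
    by (intro member_le_sum SA_polytope_nonneg finite_asg) auto
  then show ?thesis using SA_polytope_sum True by simp
qed (simp add: SA_polytope_zero_outside)

end

lemma nonneg_polytope_SA: "nonneg_polytope (SA_polytope n d m) (Sigma (SA_index n m) (asg d))"
proof
  show "finite (Sigma (SA_index n m) (asg d))"
    by (intro finite_SigmaI finite_SA_index finite_asg)
next
  fix A B t
  assume A: "A \<in> SA_polytope n d m" and B: "B \<in> SA_polytope n d m"
    and nonneg: "\<And>S x. 0 \<le> mix t A B S x"
  have sum_mix: "(\<Sum>x\<in>X. mix t A B S x) = t * (\<Sum>x\<in>X. A S x) + (1 - t) * (\<Sum>x\<in>X. B S x)"
    for X S by (simp add: mix_def sum.distrib sum_distrib_left)
  show "mix t A B \<in> SA_polytope n d m"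
    unfolding SA_polytope_def mem_Collect_eq
  proof (intro conjI)
    show "\<forall>S x. mix t A B S x \<noteq> 0 \<longrightarrow> S \<in> SA_index n m \<and> x \<in> asg d S"
    proof (intro allI impI)
      fix S x assume "mix t A B S x \<noteq> 0"
      then show "S \<in> SA_index n m \<and> x \<in> asg d S"
        using SA_polytope_zero_outside[OF A, of S x] SA_polytope_zero_outside[OF B, of S x]
        by (cases "(S, x) \<in> Sigma (SA_index n m) (asg d)") (auto simp: mix_def)
    qed
  qed (use nonneg sum_mix SA_polytope_sum[OF A] SA_polytope_sum[OF B]
         SA_polytope_marginal[OF A] SA_polytope_marginal[OF B] in \<open>simp_all add: mix_def\<close>)
next
  fix A B assume A: "A \<in> SA_polytope n d m" and B: "B \<in> SA_polytope n d m"
    and le: "\<And>S x. A S x \<le> B S x"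
  show "A = B"
  proof (intro ext)
    fix S x
    show "A S x = B S x"
    proof (cases "(S, x) \<in> Sigma (SA_index n m) (asg d)")
      case True
      then have "(\<Sum>y\<in>asg d S. B S y - A S y) = 0"
        using SA_polytope_sum[OF A] SA_polytope_sum[OF B] by (simp add: sum_subtractf)
      then have "\<forall>y\<in>asg d S. B S y - A S y = 0"
        using True le by (subst sum_nonneg_eq_0_iff[symmetric]) (auto intro: finite_asg)
      then show ?thesis using True by simp
    qed (simp add: SA_polytope_zero_outside[OF A] SA_polytope_zero_outside[OF B])
  qed
qed (simp_all add: SA_polytope_nonneg SA_polytope_zero_outside)

interpretation SA: nonneg_polytope "SA_polytope n d m" "Sigma (SA_index n m) (asg d)" for n d m
  by (rule nonneg_polytope_SA)

lemma SA_vertices_eq: "SA_vertices n d m = {V. SA.extreme_point n d m V}"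
  by (simp add: SA_vertices_def SA.extreme_point_def mix_def)

lemma asg_singleton: "asg d {i} = (\<lambda>a. (\<lambda>_. undefined)(i := a)) ` {..<d}"
proof (rule set_eqI)
  fix z
  have "z \<in> asg d {i} \<longleftrightarrow> z i < d \<and> z = (\<lambda>_. undefined)(i := z i)"
    by (auto simp: asg_def PiE_def extensional_def fun_eq_iff)
  then show "z \<in> asg d {i} \<longleftrightarrow> z \<in> (\<lambda>a. (\<lambda>_. undefined)(i := a)) ` {..<d}"
    by auto
qed

lemma sum_gam1:
  assumes G: "G \<in> SA_polytope n d m" and "i < n" "1 \<le> m"
  shows "(\<Sum>a<d. gam1 G i a) = 1"
proof -
  have "inj_on (\<lambda>a. (\<lambda>_. undefined)(i := a)) {..<d}"
    by (rule inj_onI) (metis fun_upd_same)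
  then have "(\<Sum>a<d. gam1 G i a) = (\<Sum>z\<in>asg d {i}. G {i} z)"
    by (simp add: asg_singleton gam1_def sum.reindex)
  also have "\<dots> = 1" using SA_polytope_sum[OF G singleton_SA_index] assms by simp
  finally show ?thesis .
qed

lemma SA_polytope_le_gam1:
  assumes G: "G \<in> SA_polytope n d m" and S: "S \<in> SA_index n m" and z: "z \<in> asg d S"
    and "i \<in> S" and "1 \<le> m"
  shows "G S z \<le> gam1 G i (z i)"
proof -
  have i: "{i} \<in> SA_index n m" using SA_index_subset[OF S] \<open>i \<in> S\<close> \<open>1 \<le> m\<close> singleton_SA_index by auto
  have z_i: "restrict z {i} = (\<lambda>_. undefined)(i := z i)" by (auto simp: fun_eq_iff)
  show ?thesis
  proof (cases "S = {i}")
    case True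
    then have "z = (\<lambda>_. undefined)(i := z i)"
      using z by (auto simp: asg_def PiE_def extensional_def fun_eq_iff)
    then show ?thesis using True by (simp add: gam1_def)
  next
    case False
    then have "{i} \<subset> S" using \<open>i \<in> S\<close> by auto
    have "G S z \<le> (\<Sum>x\<in>{x \<in> asg d S. restrict x {i} = (\<lambda>_. undefined)(i := z i)}. G S x)"
      using z z_i finite_asg[OF S] by (intro member_le_sum SA_polytope_nonneg[OF G]) auto
    also have "\<dots> = gam1 G i (z i)"
      unfolding gam1_def using z \<open>i \<in> S\<close>
      by (intro SA_polytope_marginal[OF G i S \<open>{i} \<subset> S\<close>]) (auto simp: asg_def split: if_splits)
    finally show ?thesis .
  qed
qed

definition delta_coll :: "nat \<Rightarrow> nat \<Rightarrow> (nat \<Rightarrow> nat) \<Rightarrow> nat set \<Rightarrow> (nat \<Rightarrow> nat) \<Rightarrow> real"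
  where "delta_coll n m y S z = (if S \<in> SA_index n m \<and> z = restrict y S then 1 else 0)"

lemma delta_coll_mem:
  assumes y: "\<forall>i<n. y i < d"
  shows "delta_coll n m y \<in> SA_polytope n d m"
  unfolding SA_polytope_def mem_Collect_eq
proof (intro conjI ballI impI allI)
  fix S assume S: "S \<in> SA_index n m"
  show "(\<Sum>z\<in>asg d S. delta_coll n m y S z) = 1"
    using S restrict_mem_asg[OF S y] finite_asg[OF S] by (simp add: delta_coll_def)
  fix T w assume T: "T \<in> SA_index n m" and "S \<subset> T" and "w \<in> asg d S"
  have "restrict (restrict y T) S = restrict y S"
    using \<open>S \<subset> T\<close> by (auto simp: fun_eq_iff)
  then show "(\<Sum>z\<in>{z \<in> asg d T. restrict z S = w}. delta_coll n m y T z) = delta_coll n m y S w"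
    using S T restrict_mem_asg[OF T y] finite_asg[OF T] by (auto simp: delta_coll_def)
qed (use restrict_mem_asg[OF _ y] in \<open>auto simp: delta_coll_def split: if_splits\<close>)

lemma gam1_delta_coll:
  assumes "i < n" "1 \<le> m"
  shows "gam1 (delta_coll n m y) i a = (if a = y i then 1 else 0)"
proof -
  have "(\<lambda>_. undefined)(i := a) = restrict y {i} \<longleftrightarrow> a = y i"
    by (auto simp: fun_eq_iff)
  then show ?thesis using assms by (simp add: gam1_def delta_coll_def singleton_SA_index)
qed

lemma gam2_delta_coll:
  assumes "i < j" "j < n" "2 \<le> m"
  shows "gam2 (delta_coll n m y) i j a b = (if a = y i \<and> b = y j then 1 else 0)"
proof -
  have "(\<lambda>_. undefined)(i := a, j := b) = restrict y {i, j} \<longleftrightarrow> a = y i \<and> b = y j"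
    using \<open>i < j\<close> by (auto simp: fun_eq_iff)
  then show ?thesis using assms by (simp add: gam2_def delta_coll_def pair_SA_index)
qed

lemma gam1_mix: "gam1 (mix t A B) i a = t * gam1 A i a + (1 - t) * gam1 B i a"
  by (simp add: gam1_def mix_def)

lemma cost_lincomb:
  "cost n d E \<theta>1 \<theta>2 (\<lambda>S x. \<alpha> * A S x + \<beta> * B S x)
    = \<alpha> * cost n d E \<theta>1 \<theta>2 A + \<beta> * cost n d E \<theta>1 \<theta>2 B"
  by (simp add: cost_def gam1_def gam2_def case_prod_unfold distrib_left mult.left_commute
      right_diff_distrib sum.distrib sum_distrib_left sum_subtractf sum_negf)

lemma cost_mix:
  "cost n d E \<theta>1 \<theta>2 (mix t A B) = t * cost n d E \<theta>1 \<theta>2 A + (1 - t) * cost n d E \<theta>1 \<theta>2 B"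
  unfolding mix_def by (rule cost_lincomb)

lemma cost_delta_coll:
  assumes y: "\<forall>i<n. y i < d" and "2 \<le> m" and E: "E \<subseteq> {(i, j). i < j \<and> j < n}"
  shows "cost n d E \<theta>1 \<theta>2 (delta_coll n m y) = - energy n E \<theta>1 \<theta>2 y"
proof -
  have "(\<Sum>a<d. - \<theta>1 i a * gam1 (delta_coll n m y) i a) = - \<theta>1 i (y i)" if "i < n" for i
    using that y \<open>2 \<le> m\<close> by (simp add: gam1_delta_coll if_distrib cong: if_cong)
  moreover have "(\<Sum>a<d. \<Sum>b<d. - \<theta>2 i j a b * gam2 (delta_coll n m y) i j a b) = - \<theta>2 i j (y i) (y j)"
    if "(i, j) \<in> E" for i j
  proof -
    have "i < j" "j < n" using that E by auto
    then have "(\<Sum>b<d. - \<theta>2 i j a b * gam2 (delta_coll n m y) i j a b)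
        = (if a = y i then - \<theta>2 i j a (y j) else 0)" for a
      using y \<open>2 \<le> m\<close> by (cases "a = y i") (simp_all add: gam2_delta_coll if_distrib cong: if_cong)
    then show ?thesis using y \<open>i < j\<close> \<open>j < n\<close> by simp
  qed
  ultimately show ?thesis
    by (simp add: cost_def energy_def case_prod_unfold sum_negf)
qed

lemma integral_coll_eq_delta_coll:
  assumes G: "G \<in> SA_polytope n d m" and "integral_coll n d m G" and "1 \<le> m"
  obtains y where "\<forall>i<n. y i < d" "G = delta_coll n m y"
proof -
  have gam1_01: "gam1 G i a \<in> {0, 1}" if "i < n" "a < d" for i a
    using assms that unfolding integral_coll_def gam1_def by (auto simp: asg_singleton singleton_SA_index)
  have "\<exists>a<d. gam1 G i a = 1" if "i < n" for i
  proof (rule ccontr)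
    assume "\<not> (\<exists>a<d. gam1 G i a = 1)"
    then have "(\<Sum>a<d. gam1 G i a) = 0" using gam1_01 that by (intro sum.neutral) blast
    then show False using sum_gam1[OF G that \<open>1 \<le> m\<close>] by simp
  qed
  then obtain y where y: "\<And>i. i < n \<Longrightarrow> y i < d \<and> gam1 G i (y i) = 1" by metis
  have gam1_other: "gam1 G i a = 0" if "i < n" "a < d" "a \<noteq> y i" for i a
    using add_le_sum[of "{..<d}" a "y i" "gam1 G i"] sum_gam1[OF G \<open>i < n\<close> \<open>1 \<le> m\<close>]
      gam1_01[OF that(1,2)] y[OF \<open>i < n\<close>] SA_polytope_nonneg[OF G] that
    by (auto simp: gam1_def)
  have "G S z \<le> delta_coll n m y S z" for S z
  proof (cases "(S, z) \<in> Sigma (SA_index n m) (asg d)")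
    case True
    then have S: "S \<in> SA_index n m" and z: "z \<in> asg d S" by auto
    show ?thesis
    proof (cases "z = restrict y S")
      case False
      then obtain i where "i \<in> S" "z i \<noteq> y i"
        using z by (fastforce simp: asg_def PiE_def extensional_def fun_eq_iff split: if_splits)
      moreover have "i < n" "z i < d" using SA_index_subset[OF S] z \<open>i \<in> S\<close> by (auto simp: asg_def)
      ultimately have "G S z \<le> 0"
        using SA_polytope_le_gam1[OF G S z \<open>i \<in> S\<close> \<open>1 \<le> m\<close>] gam1_other by simp
      then show ?thesis using False by (simp add: delta_coll_def)
    qed (simp add: delta_coll_def S SA_polytope_le_1[OF G])
  qed (simp add: SA_polytope_zero_outside[OF G] delta_coll_def)
  moreover have "\<forall>i<n. y i < d" using y by blast
  ultimately show thesis using that SA.antichain[OF G delta_coll_mem] by blast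
qed

lemma delta_coll_extreme_point:
  "\<forall>i<n. y i < d \<Longrightarrow> SA.extreme_point n d m (delta_coll n m y)"
  by (rule SA.extreme_point_if_01_valued[OF delta_coll_mem])
    (simp_all add: delta_coll_def SA_polytope_le_1)

lemma entropy_term_bounds:
  fixes t :: real
  assumes "0 \<le> t" "t \<le> 1"
  shows "0 \<le> t * (- ln t + 1)" "t * (- ln t + 1) \<le> 1"
proof -
  have "ln t \<le> 0" using assms by (cases "t = 0") simp_all
  then show "0 \<le> t * (- ln t + 1)" using assms by simp
  show "t * (- ln t + 1) \<le> 1"
  proof (cases "t = 0")
    case False
    then have "- ln t \<le> 1 / t - 1"
      using assms ln_le_minus_one[of "1 / t"] by (simp add: ln_div)
    then have "t * (- ln t) \<le> 1 - t"
      using assms mult_left_mono[of "- ln t" "1 / t - 1" t] False by (simp add: algebra_simps)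
    then show ?thesis by (simp add: algebra_simps)
  qed simp
qed

lemma entropy_diff_le_RH:
  assumes "G \<in> SA_polytope n d m" "G' \<in> SA_polytope n d m"
  shows "entropy n d m G - entropy n d m G' \<le> RH n d m"
proof -
  define N where "N = (\<Sum>S\<in>SA_index n m. real (card (asg d S)))"
  have bounds: "0 \<le> entropy n d m H \<and> entropy n d m H \<le> N" if "H \<in> SA_polytope n d m" for H
  proof -
    note term_bounds = entropy_term_bounds[OF SA_polytope_nonneg[OF that] SA_polytope_le_1[OF that]]
    have "(\<Sum>x\<in>asg d S. H S x * (- ln (H S x) + 1)) \<le> real (card (asg d S))" for S
      by (rule sum_bounded_above[of _ _ 1, simplified]) (rule term_bounds(2))
    then show ?thesis
      unfolding entropy_def N_def using term_bounds(1) by (auto intro!: sum_nonneg sum_mono)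
  qed
  have "bdd_above {entropy n d m H - entropy n d m H' | H H'.
      H \<in> SA_polytope n d m \<and> H' \<in> SA_polytope n d m}"
  proof (rule bdd_aboveI)
    fix x assume "x \<in> {entropy n d m H - entropy n d m H' | H H'.
      H \<in> SA_polytope n d m \<and> H' \<in> SA_polytope n d m}"
    then obtain H H' where "x = entropy n d m H - entropy n d m H'"
      and "H \<in> SA_polytope n d m" "H' \<in> SA_polytope n d m" by blast
    then show "x \<le> N" using bounds[of H] bounds[of H'] by linarith
  qed
  then show ?thesis unfolding RH_def using assms by (intro cSup_upper) blast+
qed

lemma one_le_R1:
  assumes "G \<in> SA_polytope n d m" "0 < n" "1 \<le> m"
  shows "1 \<le> R1 n d m"
proof -
  have "norm1 n d m H = card (SA_index n m)" if "H \<in> SA_polytope n d m" for H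
    using SA_polytope_nonneg[OF that] SA_polytope_sum[OF that] by (simp add: norm1_def)
  then have "norm1 n d m ` SA_polytope n d m = (\<lambda>_. real (card (SA_index n m))) ` SA_polytope n d m"
    by (rule image_cong[OF refl])
  then have "R1 n d m = card (SA_index n m)"
    using assms(1) unfolding R1_def by (auto simp: image_constant_conv)
  moreover have "SA_index n m \<noteq> {}" using singleton_SA_index[of 0 n m] assms by auto
  ultimately show ?thesis using finite_SA_index by (simp add: Suc_le_eq card_gt_0_iff)
qed

lemma twice_lt_if_eta_bound:
  fixes r h g \<eta> :: real
  assumes "1 \<le> r" "0 < g" "(2 * r * ln (64 * r) + 2 * r + 2 * h) / g \<le> \<eta>"
  shows "2 * h < \<eta> * g"
proof -
  have "0 \<le> 2 * r * ln (64 * r)" using \<open>1 \<le> r\<close> by simp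
  then have "2 * h < 2 * r * ln (64 * r) + 2 * r + 2 * h" using \<open>1 \<le> r\<close> by linarith
  also have "\<dots> \<le> \<eta> * g" using assms(2,3) by (simp add: pos_divide_le_eq)
  finally show ?thesis .
qed

lemma gap_bounds:
  assumes opt: "SA_opt_vertices n d m E \<theta>1 \<theta>2 = {V\<^sub>0}" and "SA_vertices n d m \<noteq> {V\<^sub>0}"
  shows "0 < gap n d m E \<theta>1 \<theta>2"
    and "\<And>V. V \<in> SA_vertices n d m \<Longrightarrow> V \<noteq> V\<^sub>0 \<Longrightarrow>
      gap n d m E \<theta>1 \<theta>2 \<le> cost n d E \<theta>1 \<theta>2 V - cost n d E \<theta>1 \<theta>2 V\<^sub>0"
proof -
  let ?c = "cost n d E \<theta>1 \<theta>2"
  define D where "D = (\<lambda>V. ?c V - ?c V\<^sub>0) ` (SA_vertices n d m - {V\<^sub>0})"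
  have V\<^sub>0: "V\<^sub>0 \<in> SA_vertices n d m" "\<forall>G\<in>SA_polytope n d m. ?c V\<^sub>0 \<le> ?c G"
    using opt by (auto simp: SA_opt_vertices_def)
  have "gap n d m E \<theta>1 \<theta>2 = Inf D"
    unfolding gap_def D_def opt by (rule arg_cong[where f = Inf]) blast
  moreover have "finite D" "D \<noteq> {}"
    using SA.finite_extreme_points V\<^sub>0(1) \<open>SA_vertices n d m \<noteq> {V\<^sub>0}\<close>
    by (auto simp: D_def SA_vertices_eq)
  moreover have "0 < ?c V - ?c V\<^sub>0" if V: "V \<in> SA_vertices n d m" "V \<noteq> V\<^sub>0" for V
  proof -
    have "V \<notin> SA_opt_vertices n d m E \<theta>1 \<theta>2" using opt V(2) by blast
    then obtain G where "G \<in> SA_polytope n d m" "?c G < ?c V"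
      using V(1) unfolding SA_opt_vertices_def by (auto simp: not_le)
    then show ?thesis using V\<^sub>0(2) by fastforce
  qed
  ultimately show "0 < gap n d m E \<theta>1 \<theta>2"
    and "\<And>V. V \<in> SA_vertices n d m \<Longrightarrow> V \<noteq> V\<^sub>0 \<Longrightarrow> gap n d m E \<theta>1 \<theta>2 \<le> ?c V - ?c V\<^sub>0"
    by (auto simp: cInf_eq_Min D_def)
qed

lemma energy_cong:
  assumes "\<forall>i<n. x i = y i" and "E \<subseteq> {(i, j). i < j \<and> j < n}"
  shows "energy n E \<theta>1 \<theta>2 x = energy n E \<theta>1 \<theta>2 y"
  using assms unfolding energy_def by (intro arg_cong2[where f = "(+)"] sum.cong) auto

lemma gam1_entropic_optimum_gt_half:
  assumes "1 \<le> m" and y\<^sub>0: "\<forall>i<n. y\<^sub>0 i < d"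
    and opt: "SA_opt_vertices n d m E \<theta>1 \<theta>2 = {delta_coll n m y\<^sub>0}"
    and "\<eta> > 0"
    and \<eta>_ge: "\<eta> \<ge> (2 * R1 n d m * ln (64 * R1 n d m) + 2 * R1 n d m + 2 * RH n d m)
                / gap n d m E \<theta>1 \<theta>2"
    and \<Gamma>: "\<Gamma> \<in> SA_polytope n d m"
    and \<Gamma>_opt: "\<forall>\<Gamma>'\<in>SA_polytope n d m.
           cost n d E \<theta>1 \<theta>2 \<Gamma> - entropy n d m \<Gamma> / \<eta>
             \<le> cost n d E \<theta>1 \<theta>2 \<Gamma>' - entropy n d m \<Gamma>' / \<eta>"
    and "i < n"
  shows "1 / 2 < gam1 \<Gamma> i (y\<^sub>0 i)"
proof -
  let ?c = "cost n d E \<theta>1 \<theta>2" and ?V\<^sub>0 = "delta_coll n m y\<^sub>0" and ?f = "\<lambda>G. gam1 G i (y\<^sub>0 i)"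
  have f_affine: "?f (mix t A B) = t * ?f A + (1 - t) * ?f B" for t A B
    by (rule gam1_mix)
  have f_V\<^sub>0: "?f ?V\<^sub>0 = 1" using gam1_delta_coll[OF \<open>i < n\<close> \<open>1 \<le> m\<close>] by simp
  have f_nonneg: "0 \<le> ?f V" if "SA.extreme_point n d m V" for V
    using that SA_polytope_nonneg by (auto simp: SA.extreme_point_def gam1_def)
  show ?thesis
  proof (cases "SA_vertices n d m = {?V\<^sub>0}")
    case True
    have "1 * (1 - ?f \<Gamma>) \<le> 0 - 0"
      by (rule SA.excess_cost_lower_bound[where c = "\<lambda>_. 0" and f = ?f, OF _ f_affine f_V\<^sub>0 f_nonneg _ _ \<Gamma>])
        (use True in \<open>auto simp: SA_vertices_eq\<close>)
    then show ?thesis by simp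
  next
    case False
    define g where "g = gap n d m E \<theta>1 \<theta>2"
    have "0 < g" using gap_bounds(1)[OF opt False] by (simp add: g_def)
    have "g * (1 - ?f \<Gamma>) \<le> ?c \<Gamma> - ?c ?V\<^sub>0"
      using gap_bounds(2)[OF opt False] \<open>0 < g\<close>
      by (intro SA.excess_cost_lower_bound[where f = ?f, OF cost_mix f_affine f_V\<^sub>0 f_nonneg _ _ \<Gamma>])
        (auto simp: g_def SA_vertices_eq)
    also have "\<dots> \<le> (entropy n d m \<Gamma> - entropy n d m ?V\<^sub>0) / \<eta>"
      using \<Gamma>_opt delta_coll_mem[OF y\<^sub>0] by (fastforce simp: diff_divide_distrib)
    also have "\<dots> \<le> RH n d m / \<eta>"
      using entropy_diff_le_RH[OF \<Gamma> delta_coll_mem[OF y\<^sub>0]] \<open>\<eta> > 0\<close> by (simp add: divide_right_mono)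
    finally have "(1 - ?f \<Gamma>) * (\<eta> * g) \<le> RH n d m"
      using \<open>\<eta> > 0\<close> by (simp add: field_simps)
    moreover have "2 * RH n d m < \<eta> * g"
      using one_le_R1[OF \<Gamma> _ \<open>1 \<le> m\<close>] \<open>i < n\<close> \<open>0 < g\<close> \<eta>_ge
      by (intro twice_lt_if_eta_bound) (auto simp: g_def)
    ultimately have "0 < (1 - 2 * (1 - ?f \<Gamma>)) * (\<eta> * g)" by (simp add: algebra_simps)
    moreover have "0 < \<eta> * g" using \<open>0 < g\<close> \<open>\<eta> > 0\<close> by simp
    ultimately show ?thesis by (simp add: zero_less_mult_iff)
  qed
qed

theorem theorem1:
  fixes n d m :: nat and E :: "(nat \<times> nat) set"
    and \<theta>1 :: "nat \<Rightarrow> nat \<Rightarrow> real" and \<theta>2 :: "nat \<Rightarrow> nat \<Rightarrow> nat \<Rightarrow> nat \<Rightarrow> real"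
    and \<eta> :: real and \<Gamma>s :: "nat set \<Rightarrow> (nat \<Rightarrow> nat) \<Rightarrow> real" and x :: "nat \<Rightarrow> nat"
  assumes "d \<ge> 1" and "2 \<le> m" and "m \<le> n"
    and "E \<subseteq> {(i, j). i < j \<and> j < n}"
    and "\<forall>i<n. \<exists>(a, b)\<in>E. i = a \<or> i = b"
    and "SA_tight n d m E \<theta>1 \<theta>2"
    and "card (SA_opt_vertices n d m E \<theta>1 \<theta>2) = 1"
    and "\<eta> > 0"
    and "\<eta> \<ge> (2 * R1 n d m * ln (64 * R1 n d m) + 2 * R1 n d m + 2 * RH n d m)
                / gap n d m E \<theta>1 \<theta>2"
    and "\<Gamma>s \<in> SA_polytope n d m"
    and "\<forall>\<Gamma>\<in>SA_polytope n d m.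
           cost n d E \<theta>1 \<theta>2 \<Gamma>s - entropy n d m \<Gamma>s / \<eta>
             \<le> cost n d E \<theta>1 \<theta>2 \<Gamma> - entropy n d m \<Gamma> / \<eta>"
    and "\<forall>i<n. x i < d \<and> (\<forall>a<d. gam1 \<Gamma>s i a \<le> gam1 \<Gamma>s i (x i))"
  shows "is_MAP n d E \<theta>1 \<theta>2 x"
proof -
  note m = \<open>2 \<le> m\<close> and E = \<open>E \<subseteq> {(i, j). i < j \<and> j < n}\<close> and \<Gamma>s = \<open>\<Gamma>s \<in> SA_polytope n d m\<close>
    and x = \<open>\<forall>i<n. x i < d \<and> (\<forall>a<d. gam1 \<Gamma>s i a \<le> gam1 \<Gamma>s i (x i))\<close>
  obtain G\<^sub>0 where G\<^sub>0: "G\<^sub>0 \<in> SA_polytope n d m" "integral_coll n d m G\<^sub>0"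
    and G\<^sub>0_min: "\<forall>G\<in>SA_polytope n d m. cost n d E \<theta>1 \<theta>2 G\<^sub>0 \<le> cost n d E \<theta>1 \<theta>2 G"
    using \<open>SA_tight n d m E \<theta>1 \<theta>2\<close> by (auto simp: SA_tight_def)
  obtain y\<^sub>0 where y\<^sub>0: "\<forall>i<n. y\<^sub>0 i < d" and "G\<^sub>0 = delta_coll n m y\<^sub>0"
    using integral_coll_eq_delta_coll[OF G\<^sub>0] m by auto
  with G\<^sub>0_min have "delta_coll n m y\<^sub>0 \<in> SA_opt_vertices n d m E \<theta>1 \<theta>2"
    by (simp add: SA_opt_vertices_def SA_vertices_eq delta_coll_extreme_point)
  then have opt: "SA_opt_vertices n d m E \<theta>1 \<theta>2 = {delta_coll n m y\<^sub>0}"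
    using \<open>card (SA_opt_vertices n d m E \<theta>1 \<theta>2) = 1\<close> by (auto simp: card_1_singleton_iff)
  have "x i = y\<^sub>0 i" if "i < n" for i
  proof (rule eq_if_gt_half[where p = "gam1 \<Gamma>s i" and d = d])
    have "1 / 2 < gam1 \<Gamma>s i (y\<^sub>0 i)"
      using gam1_entropic_optimum_gt_half[OF _ y\<^sub>0 opt _ _ \<Gamma>s] assms that by simp
    then show "1 / 2 < gam1 \<Gamma>s i (y\<^sub>0 i)" "1 / 2 < gam1 \<Gamma>s i (x i)"
      using x y\<^sub>0 that by (auto intro: less_le_trans)
  qed (use sum_gam1[OF \<Gamma>s] SA_polytope_nonneg[OF \<Gamma>s] x y\<^sub>0 that m in \<open>auto simp: gam1_def\<close>)
  then have "energy n E \<theta>1 \<theta>2 x = energy n E \<theta>1 \<theta>2 y\<^sub>0"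
    using E by (intro energy_cong) auto
  moreover have "energy n E \<theta>1 \<theta>2 y \<le> energy n E \<theta>1 \<theta>2 y\<^sub>0" if "\<forall>i<n. y i < d" for y
    using G\<^sub>0_min delta_coll_mem[OF that] cost_delta_coll[OF that m E] cost_delta_coll[OF y\<^sub>0 m E]
      \<open>G\<^sub>0 = delta_coll n m y\<^sub>0\<close> by fastforce
  ultimately show ?thesis using x by (simp add: is_MAP_def)
qed

end
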